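(* Let $p\in(0,1)$ and $0<\alpha<\frac{p}{1-p}$. Let $E:\mathbb{R}_{\ge0}\to\mathbb{R}_{\ge0}$ satisfy: (i) $E$ is a proper error score; (ii) the limits $\lim_{x\to\infty}\frac{E'(x)}{E(x)}$, $\lim_{x\to\infty}\frac{E(x)}{E(ax)}$ and $\lim_{x\to\infty}\frac{E'(x)}{E'(ax)}$ exist (in the extended reals) for every $a\in(0,1)$; (iii) $-\log E(x)\in\omega(\log x)$ as $x\to\infty$, i.e. $\frac{-\log E(x)}{\log x}\to\infty$. Then $E$ is undulating (with respect to $p,\alpha$).
   Context: A proper error score is a function $E:\mathbb{R}_{\ge0}\to\mathbb{R}_{\ge0}$ that is twice differentiable, with $E(x)>0$ and $E'(x)<0$ for all $x\ge0$, $E(0)=c_0>0$, and $\lim_{x\to\infty}E(x)=0$. Given $p\in(0,1)$ and $0<\alpha<\frac{p}{1-p}$, an error score $E$ is undulating if there exist $z_1,z_2\in\mathbb{R}$ such that $\frac{E'(pm)}{E'(\alpha(1-p)m)}>\frac{\alpha(1-p)}{p}$ for all $m\ge 0$ with $m<z_1$, and $\frac{E'(pm)}{E'(\alpha(1-p)m)}<\frac{\alpha(1-p)}{p}$ for all $m>z_2$. *)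

theory Defs
  imports "HOL-Analysis.Analysis"
begin

text \<open>A proper error score on [0,inf). E is a total function real => real; only its
values on {0..} matter. E' is its derivative (one-sided at 0, i.e. within {0..});
E is twice differentiable there (E' has a derivative E'').\<close>
definition proper_error_score :: "(real \<Rightarrow> real) \<Rightarrow> (real \<Rightarrow> real) \<Rightarrow> bool" where
  "proper_error_score E E' \<longleftrightarrow>
     (\<forall>x\<ge>0. (E has_real_derivative E' x) (at x within {0..})) \<and>
     (\<exists>E''. \<forall>x\<ge>0. (E' has_real_derivative E'' x) (at x within {0..})) \<and>
     (\<forall>x\<ge>0. E x > 0) \<and> (\<forall>x\<ge>0. E' x < 0) \<and> E 0 > 0 \<and>
     (E \<longlongrightarrow> 0) at_top"

definition undulating :: "real \<Rightarrow> real \<Rightarrow> (real \<Rightarrow> real) \<Rightarrow> bool" where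
  "undulating p \<alpha> E' \<longleftrightarrow>
     (\<exists>z1 z2::real.
        (\<forall>m. 0 \<le> m \<and> m < z1 \<longrightarrow> E' (p * m) / E' (\<alpha> * (1 - p) * m) > \<alpha> * (1 - p) / p) \<and>
        (\<forall>m. 0 \<le> m \<and> m > z2 \<longrightarrow> E' (p * m) / E' (\<alpha> * (1 - p) * m) < \<alpha> * (1 - p) / p))"

end

theory Submission
  imports Defs
begin

text \<open>Write \<open>c = \<alpha>(1-p)/p \<in> (0,1)\<close>; undulation asks whether \<open>E'(x)/E'(cx)\<close> lies above or
below \<open>c\<close> at \<open>x = pm\<close>. For small \<open>m\<close> the ratio is close to \<open>E'(0)/E'(0) = 1 > c\<close> by
continuity of \<open>E'\<close>. For large \<open>m\<close>, the ratio tends to \<open>0\<close>: if it stayed above some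
\<open>r > 0\<close>, then \<open>-E'(x) > r (-E'(cx))\<close> would propagate a lower bound over the intervals
\<open>[X, X/c\<^sup>k]\<close>, so \<open>-E'\<close> would decay at most polynomially, and by the mean value theorem
\<open>E(x) > x (-E'(z))\<close> with \<open>z \<in> (x, 2x)\<close> so would \<open>E\<close>, contradicting
\<open>-log E(x) \<in> \<omega>(log x)\<close>.\<close>

lemma geometric_lower_bound_by_ratio:
  fixes g :: "real \<Rightarrow> real"
  assumes c: "0 < c" "c < 1" and r: "0 < r" "r < 1" and X0: "X0 > 0" and m0: "m0 > 0"
    and base: "\<forall>x. X0 \<le> x \<and> x \<le> X0 / c \<longrightarrow> m0 \<le> g x"
    and step: "\<forall>x\<ge>X0. r * g (c * x) < g x"
  shows "X0 \<le> x \<Longrightarrow> x \<le> X0 / c ^ Suc k \<Longrightarrow> m0 * r ^ k \<le> g x"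
proof (induction k arbitrary: x)
  case 0
  then show ?case using base by simp
next
  case (Suc k)
  show ?case
  proof (cases "x \<le> X0 / c ^ Suc k")
    case True
    have "m0 * r ^ Suc k \<le> m0 * r ^ k"
      using m0 r by (simp add: power_decreasing)
    also have "\<dots> \<le> g x" using Suc True by blast
    finally show ?thesis .
  next
    case False
    have ck: "c ^ Suc k > 0" using c by simp
    have "X0 / c ^ Suc k < x" using False by linarith
    then have "X0 < x * c ^ Suc k" using ck by (simp only: pos_divide_less_eq)
    also have "\<dots> \<le> x * c" using c Suc.prems X0 by (intro mult_left_mono) (auto simp: power_le_one)
    finally have lo: "X0 \<le> c * x" by (simp add: mult.commute)
    have "(c * x) * c ^ Suc k \<le> X0"
      using Suc.prems c by (simp add: le_divide_eq algebra_simps)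
    then have hi: "c * x \<le> X0 / c ^ Suc k" using ck by (simp add: le_divide_eq)
    have "m0 * r ^ Suc k = r * (m0 * r ^ k)" by simp
    also have "\<dots> \<le> r * g (c * x)" using Suc.IH[OF lo hi] r by simp
    also have "\<dots> < g x" using step Suc.prems by auto
    finally show ?thesis by simp
  qed
qed

lemma log_linear_lower_bound_by_ratio:
  fixes g :: "real \<Rightarrow> real"
  assumes c: "0 < c" "c < 1" and r: "0 < r" "r < 1" and X0: "X0 > 0"
    and cont: "continuous_on {X0..} g" and pos: "\<forall>x\<ge>X0. g x > 0"
    and step: "\<forall>x\<ge>X0. r * g (c * x) < g x"
  shows "\<exists>b K. \<forall>z\<ge>X0. b * ln z + K \<le> ln (g z)"
proof -
  have "{X0..X0/c} \<noteq> {}" using c X0 by (simp add: field_simps)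
  moreover have "continuous_on {X0..X0/c} g" using cont by (rule continuous_on_subset) auto
  ultimately obtain xm where xm: "xm \<in> {X0..X0/c}" "\<forall>y\<in>{X0..X0/c}. g xm \<le> g y"
    using continuous_attains_inf[OF compact_Icc] by blast
  define m0 where "m0 = g xm"
  have m0: "m0 > 0" unfolding m0_def using xm pos by auto
  have geom: "m0 * r ^ k \<le> g x" if "X0 \<le> x" "x \<le> X0 / c ^ Suc k" for x k
    using geometric_lower_bound_by_ratio[OF c r X0 m0 _ step] xm that unfolding m0_def by auto
  define b where "b = ln r / - ln c"
  have lc: "ln c < 0" and lr: "ln r < 0" using c r by auto
  have "b * ln z + (ln m0 + ln r - b * ln X0) \<le> ln (g z)" if z: "z \<ge> X0" for z
  proof -
    define t where "t = ln (z / X0) / - ln c"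
    have t0: "t \<ge> 0" unfolding t_def using z X0 lc by (intro divide_nonneg_pos) auto
    define k where "k = nat \<lceil>t\<rceil>"
    have k1: "t \<le> real k" and k2: "real k \<le> t + 1" unfolding k_def using t0 by linarith+
    have "ln (c ^ k) = real k * ln c" using c by (simp add: ln_realpow)
    also have "\<dots> \<le> t * ln c" using k1 lc by (simp add: mult_right_mono_neg)
    also have "\<dots> = ln (X0 / z)" unfolding t_def using lc z X0 by (simp add: ln_div field_simps)
    finally have "c ^ k \<le> X0 / z" using c z X0 by (subst (asm) ln_le_cancel_iff) auto
    then have "c ^ Suc k \<le> X0 / z" using c power_decreasing[of k "Suc k" c] by linarith
    then have "z \<le> X0 / c ^ Suc k" using c z X0 by (simp add: le_divide_eq mult.commute)
    then have "ln (m0 * r ^ k) \<le> ln (g z)" using geom[OF z] m0 r pos z by (subst ln_le_cancel_iff) auto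
    moreover have "ln (m0 * r ^ k) = ln m0 + real k * ln r" using m0 r by (simp add: ln_mult ln_realpow)
    moreover have "(t + 1) * ln r \<le> real k * ln r" using k2 lr by (simp add: mult_right_mono_neg)
    moreover have "t * ln r = b * (ln z - ln X0)"
      unfolding t_def b_def using z X0 by (simp add: ln_div)
    ultimately show ?thesis by (simp add: algebra_simps)
  qed
  then show ?thesis by blast
qed

lemma proper_error_score_continuous_deriv:
  assumes "proper_error_score E E'"
  shows "continuous_on {0..} E'"
proof -
  obtain E'' where "\<forall>x\<ge>0. (E' has_real_derivative E'' x) (at x within {0..})"
    using assms unfolding proper_error_score_def by blast
  then show ?thesis
    by (metis DERIV_continuous atLeast_iff continuous_on_eq_continuous_within)
qed

lemma proper_error_score_gt_deriv_mult:
  assumes pes: "proper_error_score E E'" and x: "x > 0"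
  obtains z where "x < z" "z < 2 * x" "x * - E' z < E x"
proof -
  have "(E has_real_derivative E' y) (at y)" if "y > 0" for y
    using pes that at_within_interior[of y "{0..}"]
    unfolding proper_error_score_def by (metis interior_real_atLeast greaterThan_iff less_imp_le)
  then obtain z where z: "x < z" "z < 2 * x" "E (2 * x) - E x = (2 * x - x) * E' z"
    using MVT2[of x "2 * x" E E'] x by fastforce
  moreover have "E (2 * x) > 0" using pes x unfolding proper_error_score_def by simp
  ultimately show thesis using that by (simp add: algebra_simps)
qed

lemma superlogarithmic_not_log_linear_bounded:
  fixes f :: "real \<Rightarrow> real"
  assumes super: "filterlim (\<lambda>x. f x / ln x) at_top at_top"
    and bound: "\<forall>\<^sub>F x in at_top. f x \<le> B * ln x + D"
  shows False
proof -
  have "\<forall>\<^sub>F x in at_top. B + \<bar>D\<bar> < f x / ln x"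
    using super by (simp add: filterlim_at_top_dense)
  moreover have "\<forall>\<^sub>F x in at_top. exp 1 \<le> (x::real)" by simp
  ultimately have "\<forall>\<^sub>F x::real in at_top. False" using bound
  proof eventually_elim
    case (elim x)
    then have lx: "1 \<le> ln x" using ln_ge_iff[of x 1] exp_gt_zero[of 1] by linarith
    have "D \<le> \<bar>D\<bar> * ln x" using lx
      by (metis abs_ge_self abs_ge_zero mult_left_mono mult.right_neutral order_trans)
    then have "D / ln x \<le> \<bar>D\<bar>" using lx by (simp add: divide_le_eq)
    have "f x / ln x \<le> (B * ln x + D) / ln x" using elim lx by (intro divide_right_mono) auto
    also have "\<dots> = B + D / ln x" using lx by (simp add: field_simps)
    finally show False using elim \<open>D / ln x \<le> \<bar>D\<bar>\<close> by linarith
  qed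
  then show False by simp
qed

lemma deriv_ratio_not_eventually_gt:
  assumes pes: "proper_error_score E E'"
    and decay: "filterlim (\<lambda>x. - ln (E x) / ln x) at_top at_top"
    and c: "0 < c" "c < 1" and r: "0 < r"
  shows "\<not> (\<forall>\<^sub>F x in at_top. r < E' x / E' (c * x))"
proof
  assume "\<forall>\<^sub>F x in at_top. r < E' x / E' (c * x)"
  then obtain X where X: "\<And>x. x \<ge> X \<Longrightarrow> r < E' x / E' (c * x)"
    by (auto simp: eventually_at_top_linorder)
  define X0 where "X0 = max X 1"
  define r' where "r' = min r (1 / 2)"
  have r': "0 < r'" "r' < 1" unfolding r'_def using r by auto
  have E'neg: "\<And>x. x \<ge> 0 \<Longrightarrow> E' x < 0" using pes unfolding proper_error_score_def by blast
  have step: "\<forall>x\<ge>X0. r' * - E' (c * x) < - E' x"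
  proof (intro allI impI)
    fix x assume x: "x \<ge> X0"
    have neg: "E' (c * x) < 0" using E'neg c x unfolding X0_def by simp
    then have "E' x < r * E' (c * x)" using X[of x] x unfolding X0_def by (simp add: neg_less_divide_eq)
    also have "\<dots> \<le> r' * E' (c * x)" using neg unfolding r'_def by (intro mult_right_mono_neg) auto
    finally show "r' * - E' (c * x) < - E' x" by simp
  qed
  have "continuous_on {X0..} (\<lambda>x. - E' x)"
    using proper_error_score_continuous_deriv[OF pes] unfolding X0_def
    by (intro continuous_intros) (auto elim: continuous_on_subset)
  then obtain b K where bK: "\<And>z. z \<ge> X0 \<Longrightarrow> b * ln z + K \<le> ln (- E' z)"
    using log_linear_lower_bound_by_ratio[OF c r' _ _ _ step] E'neg unfolding X0_def by fastforce
  have "- ln (E x) \<le> (\<bar>b\<bar> - 1) * ln x + (\<bar>b\<bar> * ln 2 - K)" if x: "x \<ge> X0" for x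
  proof -
    have x1: "x \<ge> 1" using x unfolding X0_def by simp
    obtain z where z: "x < z" "z < 2 * x" "x * - E' z < E x"
      using proper_error_score_gt_deriv_mult[OF pes] x1 by (metis less_le_trans zero_less_one)
    have gz: "- E' z > 0" using E'neg z x1 by simp
    have "ln x + ln (- E' z) = ln (x * - E' z)" using x1 gz by (subst ln_mult) auto
    also have "\<dots> < ln (E x)" using z x1 gz mult_pos_neg[of x "E' z"] by (subst ln_less_cancel_iff) auto
    finally have "ln x + ln (- E' z) < ln (E x)" .
    moreover have "b * ln z + K \<le> ln (- E' z)" using bK x z by simp
    moreover have "- \<bar>b\<bar> * (ln 2 + ln x) \<le> b * ln z"
    proof -
      have lz: "0 \<le> ln z" using z x1 by simp
      have "ln z \<le> ln (2 * x)" using z x1 by simp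
      also have "\<dots> = ln 2 + ln x" using x1 by (simp add: ln_mult)
      finally have "\<bar>b\<bar> * ln z \<le> \<bar>b\<bar> * (ln 2 + ln x)" by (intro mult_left_mono) auto
      moreover have "- \<bar>b\<bar> * ln z \<le> b * ln z" using lz by (intro mult_right_mono) auto
      ultimately show ?thesis by linarith
    qed
    ultimately show ?thesis by (simp add: algebra_simps)
  qed
  then have "\<forall>\<^sub>F x in at_top. - ln (E x) \<le> (\<bar>b\<bar> - 1) * ln x + (\<bar>b\<bar> * ln 2 - K)"
    by (auto simp: eventually_at_top_linorder)
  then show False by (rule superlogarithmic_not_log_linear_bounded[OF decay])
qed

lemma deriv_ratio_eventually_lt:
  assumes pes: "proper_error_score E E'"
    and decay: "filterlim (\<lambda>x. - ln (E x) / ln x) at_top at_top"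
    and c: "0 < c" "c < 1" and r: "0 < r"
    and lim: "((\<lambda>x. ereal (E' x / E' (c * x))) \<longlongrightarrow> L) at_top"
  shows "\<forall>\<^sub>F x in at_top. E' x / E' (c * x) < r"
proof (cases "L < ereal r")
  case True
  from order_tendstoD(2)[OF lim True] show ?thesis by simp
next
  case False
  moreover have "ereal (r / 2) < ereal r" using r by simp
  ultimately have "ereal (r / 2) < L" using order_less_le_trans not_less by blast
  from order_tendstoD(1)[OF lim this] have "\<forall>\<^sub>F x in at_top. r / 2 < E' x / E' (c * x)" by simp
  with deriv_ratio_not_eventually_gt[OF pes decay c, of "r / 2"] r show ?thesis by simp
qed

lemma deriv_ratio_near_zero_gt:
  assumes pes: "proper_error_score E E'" and a: "0 \<le> a" and b: "0 \<le> b" and s: "s < 1"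
  shows "\<exists>z>0. \<forall>m. 0 \<le> m \<and> m < z \<longrightarrow> s < E' (a * m) / E' (b * m)"
proof -
  define h where "h m = E' (a * m) / E' (b * m)" for m
  have E'neg: "\<And>x. x \<ge> 0 \<Longrightarrow> E' x < 0" using pes unfolding proper_error_score_def by blast
  have cont: "continuous_on {0..} E'" by (rule proper_error_score_continuous_deriv[OF pes])
  have "continuous_on {0..} (\<lambda>m. E' (k * m))" if "0 \<le> k" for k
    using that by (intro continuous_on_compose2[OF cont] continuous_intros) auto
  moreover have "E' (b * m) \<noteq> 0" if "m \<in> {0..}" for m
    using E'neg[of "b * m"] b that by simp
  ultimately have "continuous_on {0..} h" unfolding h_def using a b
    by (intro continuous_on_divide) auto
  then have "(h \<longlongrightarrow> h 0) (at 0 within {0..})"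
    by (simp add: continuous_on_def)
  moreover have "h 0 = 1" unfolding h_def using E'neg[of 0] by simp
  ultimately have "\<forall>\<^sub>F m in at 0 within {0..}. s < h m" using s by (simp add: order_tendstoD(1))
  then obtain d where d: "d > 0" "\<And>m. m \<in> {0..} \<Longrightarrow> m \<noteq> 0 \<Longrightarrow> dist m 0 < d \<Longrightarrow> s < h m"
    by (auto simp: eventually_at)
  have "s < h m" if "0 \<le> m" "m < d" for m
    using d that \<open>h 0 = 1\<close> s by (cases "m = 0") auto
  with d show ?thesis unfolding h_def by blast
qed

theorem theorem2:
  fixes p \<alpha> :: real and E E' :: "real \<Rightarrow> real"
  assumes "0 < p" "p < 1" "0 < \<alpha>" "\<alpha> < p / (1 - p)"
    and "proper_error_score E E'"
    and "\<exists>L::ereal. ((\<lambda>x. ereal (E' x / E x)) \<longlongrightarrow> L) at_top"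
    and "\<forall>a. 0 < a \<and> a < 1 \<longrightarrow> (\<exists>L::ereal. ((\<lambda>x. ereal (E x / E (a * x))) \<longlongrightarrow> L) at_top)"
    and "\<forall>a. 0 < a \<and> a < 1 \<longrightarrow> (\<exists>L::ereal. ((\<lambda>x. ereal (E' x / E' (a * x))) \<longlongrightarrow> L) at_top)"
    and "filterlim (\<lambda>x. - ln (E x) / ln x) at_top at_top"
  shows "undulating p \<alpha> E'"
proof -
  \<comment> \<open>Only the limit of \<open>E'(x)/E'(ax)\<close> (at \<open>a = c\<close>) is needed; the other limit hypotheses are not.\<close>
  define c where "c = \<alpha> * (1 - p) / p"
  have "\<alpha> * (1 - p) < p" using assms(1-4) by (simp add: less_divide_eq)
  then have c: "0 < c" "c < 1" unfolding c_def using assms(1-3) by simp_all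
  have "0 \<le> \<alpha> * (1 - p)" using assms(2,3) by simp
  then obtain z1 where z1: "\<forall>m. 0 \<le> m \<and> m < z1 \<longrightarrow> c < E' (p * m) / E' (\<alpha> * (1 - p) * m)"
    using deriv_ratio_near_zero_gt[OF assms(5), of p _ c] assms(1) c by auto
  obtain L where "((\<lambda>x. ereal (E' x / E' (c * x))) \<longlongrightarrow> L) at_top" using assms(8) c by blast
  from deriv_ratio_eventually_lt[OF assms(5,9) c c(1) this]
  obtain X where X: "\<And>x. x \<ge> X \<Longrightarrow> E' x / E' (c * x) < c" by (auto simp: eventually_at_top_linorder)
  have "E' (p * m) / E' (\<alpha> * (1 - p) * m) < c" if "m > X / p" for m
  proof -
    have "p * m \<ge> X" using that assms(1) by (simp add: field_simps)
    then have "E' (p * m) / E' (c * (p * m)) < c" by (rule X)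
    moreover have "c * (p * m) = \<alpha> * (1 - p) * m" unfolding c_def using assms(1) by simp
    ultimately show ?thesis by simp
  qed
  with z1 show ?thesis unfolding undulating_def c_def by blast
qed

end
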